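(* Let $\mathbb{F}$ be an algebraically closed field with $\mathrm{char}\,\mathbb{F}=2$. Let $\underline{a}=(a_1,0,\ldots,0)\in\mathbb{M}^n$ with $a_1\in\{1_{\mathbf{O}},e_1\}$, and let $\underline{b}\in\mathbb{M}^n$ be such that $\dim\mathrm{alg}(\underline{b})\le1$ and $f(\underline{a})=f(\underline{b})$ for all $f\in S_n^{(2)}$. Then ${\rm G}_2\underline{a}={\rm G}_2\underline{b}$.
   Context: The split octonion algebra $\mathbf{O}$ is the 8-dimensional $\mathbb{F}$-vector space of formal matrices $a=\begin{pmatrix}\alpha&\mathbf{u}\\ \mathbf{v}&\beta\end{pmatrix}$ with $\alpha,\beta\in\mathbb{F}$, $\mathbf{u},\mathbf{v}\in\mathbb{F}^3$, with multiplication $\begin{pmatrix}\alpha&\mathbf{u}\\ \mathbf{v}&\beta\end{pmatrix}\begin{pmatrix}\alpha'&\mathbf{u}'\\ \mathbf{v}'&\beta'\end{pmatrix}=\begin{pmatrix}\alpha\alpha'+\mathbf{u}\cdot\mathbf{v}'&\alpha\mathbf{u}'+\beta'\mathbf{u}-\mathbf{v}\times\mathbf{v}'\\ \alpha'\mathbf{v}+\beta\mathbf{v}'+\mathbf{u}\times\mathbf{u}'&\beta\beta'+\mathbf{v}\cdot\mathbf{u}'\end{pmatrix}$ (dot product and cross product on $\mathbb{F}^3$). Trace $\mathrm{tr}(a)=\alpha+\beta$, norm $n(a)=\alpha\beta-\mathbf{u}\cdot\mathbf{v}$. $e_1$ has $\alpha=1$ and all else $0$, $e_2$ has $\beta=1$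 and all else $0$, $1_{\mathbf{O}}=e_1+e_2$. $\mathbb{M}=\left\{\begin{pmatrix}\alpha&(\gamma,0,0)\\(\delta,0,0)&\beta\end{pmatrix}\right\}\subseteq\mathbf{O}$ is the quaternion subalgebra. ${\rm G}_2=\mathrm{Aut}(\mathbf{O})$ acts diagonally on $\mathbf{O}^n$. For $\underline{b}\in\mathbf{O}^n$, $\mathrm{alg}(\underline{b})$ is the (non-unital) $\mathbb{F}$-subalgebra of $\mathbf{O}$ generated by $b_1,\ldots,b_n$. $S_n^{(2)}$ is the set of functions on $\mathbf{O}^n$: $\underline{a}\mapsto n(a_i)$, $\underline{a}\mapsto\mathrm{tr}(a_i)$ ($1\le i\le n$), and $\underline{a}\mapsto\mathrm{tr}(a_ia_j)$ ($1\le i<j\le n$). *)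

theory Defs
  imports Main "HOL-Computational_Algebra.Polynomial"
begin

text \<open>An element (alpha, u, v, beta) represents the formal matrix
  [[alpha, u], [v, beta]] with alpha, beta scalars and u, v in F^3.\<close>

datatype 'a oct = Oct 'a "'a \<times> 'a \<times> 'a" "'a \<times> 'a \<times> 'a" 'a

type_synonym 'a vec3 = "'a \<times> 'a \<times> 'a"

definition dot3 :: "'a::comm_ring_1 vec3 \<Rightarrow> 'a vec3 \<Rightarrow> 'a" where
  "dot3 u w = (case u of (u1,u2,u3) \<Rightarrow> case w of (w1,w2,w3) \<Rightarrow> u1*w1 + u2*w2 + u3*w3)"

definition cross3 :: "'a::comm_ring_1 vec3 \<Rightarrow> 'a vec3 \<Rightarrow> 'a vec3" where
  "cross3 u w = (case u of (u1,u2,u3) \<Rightarrow> case w of (w1,w2,w3) \<Rightarrow>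
     (u2*w3 - u3*w2, u3*w1 - u1*w3, u1*w2 - u2*w1))"

definition sc3 :: "'a::comm_ring_1 \<Rightarrow> 'a vec3 \<Rightarrow> 'a vec3" where
  "sc3 c u = (case u of (u1,u2,u3) \<Rightarrow> (c*u1, c*u2, c*u3))"

definition add3 :: "'a::comm_ring_1 vec3 \<Rightarrow> 'a vec3 \<Rightarrow> 'a vec3" where
  "add3 u w = (case u of (u1,u2,u3) \<Rightarrow> case w of (w1,w2,w3) \<Rightarrow> (u1+w1, u2+w2, u3+w3))"

instantiation oct :: (ab_group_add) ab_group_add
begin
fun plus_oct :: "'a oct \<Rightarrow> 'a oct \<Rightarrow> 'a oct" where
  "plus_oct (Oct a (u1,u2,u3) (v1,v2,v3) b) (Oct a' (u1',u2',u3') (v1',v2',v3') b') =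
     Oct (a+a') (u1+u1',u2+u2',u3+u3') (v1+v1',v2+v2',v3+v3') (b+b')"
fun uminus_oct :: "'a oct \<Rightarrow> 'a oct" where
  "uminus_oct (Oct a (u1,u2,u3) (v1,v2,v3) b) = Oct (-a) (-u1,-u2,-u3) (-v1,-v2,-v3) (-b)"
definition zero_oct :: "'a oct" where "zero_oct = Oct 0 (0,0,0) (0,0,0) 0"
definition minus_oct :: "'a oct \<Rightarrow> 'a oct \<Rightarrow> 'a oct" where "minus_oct x y = x + (- y)"
instance
proof
  fix x y z :: "'a oct"
  show "x + y + z = x + (y + z)"
    by (cases x; cases y; cases z) (auto simp: algebra_simps)
  show "x + y = y + x"
    by (cases x; cases y) (auto simp: algebra_simps)
  show "0 + x = x"
    by (cases x) (auto simp: zero_oct_def)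
  show "- x + x = 0"
    by (cases x) (auto simp: zero_oct_def)
  show "x - y = x + - y" by (simp add: minus_oct_def)
qed
end

instantiation oct :: (comm_ring_1) times
begin
fun times_oct :: "'a oct \<Rightarrow> 'a oct \<Rightarrow> 'a oct" where
  "times_oct (Oct a u v b) (Oct a' u' v' b') =
     Oct (a*a' + dot3 u v')
         (add3 (add3 (sc3 a u') (sc3 b' u)) (sc3 (-1) (cross3 v v')))
         (add3 (add3 (sc3 a' v) (sc3 b v')) (cross3 u u'))
         (b*b' + dot3 v u')"
instance ..
end

fun osc :: "'a::comm_ring_1 \<Rightarrow> 'a oct \<Rightarrow> 'a oct" where
  "osc c (Oct a u v b) = Oct (c*a) (sc3 c u) (sc3 c v) (c*b)"

fun otr :: "'a::comm_ring_1 oct \<Rightarrow> 'a" where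
  "otr (Oct a u v b) = a + b"

fun onorm :: "'a::comm_ring_1 oct \<Rightarrow> 'a" where
  "onorm (Oct a u v b) = a*b - dot3 u v"

definition e1 :: "'a::comm_ring_1 oct" where "e1 = Oct 1 (0,0,0) (0,0,0) 0"
definition e2 :: "'a::comm_ring_1 oct" where "e2 = Oct 0 (0,0,0) (0,0,0) 1"
definition one_O :: "'a::comm_ring_1 oct" where "one_O = e1 + e2"

definition quatM :: "'a::comm_ring_1 oct set" where
  "quatM = {Oct a (c,0,0) (d,0,0) b | a b c d. True}"

definition is_G2 :: "('a::comm_ring_1 oct \<Rightarrow> 'a oct) \<Rightarrow> bool" where
  "is_G2 g \<longleftrightarrow> bij g \<and> (\<forall>x y. g (x + y) = g x + g y) \<and> (\<forall>c x. g (osc c x) = osc c (g x))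
     \<and> (\<forall>x y. g (x * y) = g x * g y)"

text \<open>Equality of G_2-orbits of n-tuples (tuples indexed by 0..n-1): same orbit iff
  some automorphism maps one tuple to the other componentwise.\<close>
definition same_G2_orbit :: "nat \<Rightarrow> (nat \<Rightarrow> 'a::comm_ring_1 oct) \<Rightarrow> (nat \<Rightarrow> 'a oct) \<Rightarrow> bool" where
  "same_G2_orbit n a b \<longleftrightarrow> (\<exists>g. is_G2 g \<and> (\<forall>i<n. g (a i) = b i))"

inductive_set alg_gen :: "nat \<Rightarrow> (nat \<Rightarrow> 'a::comm_ring_1 oct) \<Rightarrow> 'a oct set"
  for n :: nat and b :: "nat \<Rightarrow> 'a oct" where
  gen: "i < n \<Longrightarrow> b i \<in> alg_gen n b"
| zero: "0 \<in> alg_gen n b"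
| add: "x \<in> alg_gen n b \<Longrightarrow> y \<in> alg_gen n b \<Longrightarrow> x + y \<in> alg_gen n b"
| scale: "x \<in> alg_gen n b \<Longrightarrow> osc c x \<in> alg_gen n b"
| mult: "x \<in> alg_gen n b \<Longrightarrow> y \<in> alg_gen n b \<Longrightarrow> x * y \<in> alg_gen n b"

definition odim :: "'a::field oct set \<Rightarrow> nat" where
  "odim S = vector_space.dim osc S"

definition S2_agree :: "nat \<Rightarrow> (nat \<Rightarrow> 'a::comm_ring_1 oct) \<Rightarrow> (nat \<Rightarrow> 'a oct) \<Rightarrow> bool" where
  "S2_agree n a b \<longleftrightarrow>
     (\<forall>i<n. onorm (a i) = onorm (b i)) \<and> (\<forall>i<n. otr (a i) = otr (b i)) \<and>
     (\<forall>i j. i < j \<and> j < n \<longrightarrow> otr (a i * a j) = otr (b i * b j))"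

definition alg_closed_field :: "'a::field itself \<Rightarrow> bool" where
  "alg_closed_field _ \<longleftrightarrow> (\<forall>p :: 'a poly. degree p > 0 \<longrightarrow> (\<exists>x. poly p x = 0))"

end

theory Submission imports Defs begin

text \<open>Every \<open>b\<^sub>i\<close> lies in the line \<open>alg(b)\<close>, so \<open>b\<^sub>i = k\<^sub>i b\<^sub>1\<close>. The invariants of
  \<open>a\<^sub>1\<close> give \<open>(n(b\<^sub>1), tr(b\<^sub>1)) \<in> {(1,0), (0,1)}\<close> (using \<open>tr(1) = 2 = 0\<close>), so for \<open>i > 1\<close>
  the equations \<open>n(b\<^sub>i) = k\<^sub>i\<^sup>2 n(b\<^sub>1) = 0\<close> and \<open>tr(b\<^sub>i) = k\<^sub>i tr(b\<^sub>1) = 0\<close> force \<open>b\<^sub>i = 0 = a\<^sub>i\<close>. If \<open>a\<^sub>1 = 1\<close>, the quadratic identity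
  \<open>x\<^sup>2 = tr(x) x - n(x) 1\<close> gives \<open>b\<^sub>1\<^sup>2 = -1\<close>, while \<open>b\<^sub>1\<^sup>2 = c b\<^sub>1\<close>; taking norms, \<open>c\<^sup>2 = 1\<close>,
  so \<open>c = 1\<close> in characteristic 2 and \<open>b\<^sub>1 = -1 = 1\<close>. If \<open>a\<^sub>1 = e\<^sub>1\<close>, then \<open>b\<^sub>1 \<in> \<bbbM>\<close> has
  trace 1 and norm 0, and elements of two unipotent one-parameter subgroups of \<open>G\<^sub>2\<close>
  carry \<open>e\<^sub>1\<close> to it.\<close>

lemma oct_exhaust8:
  obtains a u1 u2 u3 v1 v2 v3 b where "x = Oct a (u1,u2,u3) (v1,v2,v3) b"
  by (metis oct.exhaust prod_cases3)

lemma one_O_eq: "one_O = Oct 1 (0,0,0) (0,0,0) 1"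
  by (simp add: one_O_def e1_def e2_def)

lemma otr_one_O [simp]: "otr one_O = 2"
  by (simp add: one_O_eq)

lemma onorm_one_O [simp]: "onorm one_O = 1"
  by (simp add: one_O_eq dot3_def)

lemma otr_e1 [simp]: "otr e1 = 1"
  by (simp add: e1_def)

lemma onorm_e1 [simp]: "onorm e1 = 0"
  by (simp add: e1_def dot3_def)

lemma osc_zero_left [simp]: "osc 0 x = 0"
  by (cases x rule: oct_exhaust8) (simp add: sc3_def zero_oct_def)

lemma otr_zero [simp]: "otr 0 = 0"
  by (simp add: zero_oct_def)

lemma onorm_zero [simp]: "onorm 0 = 0"
  by (simp add: zero_oct_def dot3_def)

lemma otr_osc: "otr (osc c x) = c * otr x"
  by (cases x rule: oct_exhaust8) (simp add: sc3_def algebra_simps)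

lemma onorm_osc: "onorm (osc c x) = c * c * onorm x"
  by (cases x rule: oct_exhaust8) (simp add: sc3_def dot3_def algebra_simps)

lemma onorm_uminus: "onorm (- x) = onorm x"
  by (cases x rule: oct_exhaust8) (simp add: dot3_def)

lemma oct_square: "x * x = osc (otr x) x - osc (onorm x) one_O"
proof (cases x rule: oct_exhaust8)
  case (1 a u1 u2 u3 v1 v2 v3 b)
  then show ?thesis
    by (simp add: one_O_eq minus_oct_def dot3_def cross3_def sc3_def add3_def algebra_simps)
qed

interpretation oct_vs: vector_space "osc :: 'a::field \<Rightarrow> 'a oct \<Rightarrow> 'a oct"
proof
  fix a b :: 'a and x y :: "'a oct"
  show "osc a (x + y) = osc a x + osc a y"
    by (cases x rule: oct_exhaust8; cases y rule: oct_exhaust8) (simp add: algebra_simps sc3_def)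
  show "osc (a + b) x = osc a x + osc b x"
    by (cases x rule: oct_exhaust8) (simp add: algebra_simps sc3_def)
  show "osc a (osc b x) = osc (a * b) x"
    by (cases x rule: oct_exhaust8) (simp add: algebra_simps sc3_def)
  show "osc 1 x = x"
    by (cases x rule: oct_exhaust8) (simp add: sc3_def)
qed

definition oct_unit_vectors :: "'a::field oct set" where
  "oct_unit_vectors =
    {Oct 1 (0,0,0) (0,0,0) 0, Oct 0 (1,0,0) (0,0,0) 0, Oct 0 (0,1,0) (0,0,0) 0,
     Oct 0 (0,0,1) (0,0,0) 0, Oct 0 (0,0,0) (1,0,0) 0, Oct 0 (0,0,0) (0,1,0) 0,
     Oct 0 (0,0,0) (0,0,1) 0, Oct 0 (0,0,0) (0,0,0) 1}"

lemma span_oct_unit_vectors: "(x::'a::field oct) \<in> oct_vs.span oct_unit_vectors"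
proof (cases x rule: oct_exhaust8)
  case (1 a u1 u2 u3 v1 v2 v3 b)
  have "x = osc a (Oct 1 (0,0,0) (0,0,0) 0) + osc u1 (Oct 0 (1,0,0) (0,0,0) 0)
      + osc u2 (Oct 0 (0,1,0) (0,0,0) 0) + osc u3 (Oct 0 (0,0,1) (0,0,0) 0)
      + osc v1 (Oct 0 (0,0,0) (1,0,0) 0) + osc v2 (Oct 0 (0,0,0) (0,1,0) 0)
      + osc v3 (Oct 0 (0,0,0) (0,0,1) 0) + osc b (Oct 0 (0,0,0) (0,0,0) 1)"
    using 1 by (simp add: sc3_def)
  also have "\<dots> \<in> oct_vs.span oct_unit_vectors"
    by (intro oct_vs.span_add oct_vs.span_scale oct_vs.span_base) (auto simp: oct_unit_vectors_def)
  finally show ?thesis .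
qed

lemma dim_le_one_imp_multiple:
  fixes S :: "'a::field oct set"
  assumes "oct_vs.dim S \<le> 1" "x \<in> S" "x \<noteq> 0" "y \<in> S"
  shows "\<exists>c. y = osc c x"
proof -
  obtain B where B: "B \<subseteq> S" "oct_vs.independent B" "S \<subseteq> oct_vs.span B" "card B = oct_vs.dim S"
    by (rule oct_vs.basis_exists)
  have "finite B"
    using oct_vs.independent_span_bound[of oct_unit_vectors B] B(2) span_oct_unit_vectors
    by (auto simp: oct_unit_vectors_def)
  moreover have "B \<noteq> {}"
    using B(3) assms(2,3) oct_vs.span_empty by auto
  ultimately have "card B = 1"
    using B(4) assms(1) by (metis One_nat_def card_0_eq le_Suc_eq le_zero_eq)
  then obtain w where w: "B = {w}"
    by (rule card_1_singletonE)
  obtain k where k: "x = osc k w"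
    using B(3) assms(2) w oct_vs.span_singleton by blast
  obtain m where m: "y = osc m w"
    using B(3) assms(4) w oct_vs.span_singleton by blast
  have "k \<noteq> 0"
    using k assms(3) by auto
  then have "y = osc (m / k) x"
    using k m by simp
  then show ?thesis by blast
qed

lemma osc_null_traceless_eq_zero:
  fixes x :: "'a::field oct"
  assumes "onorm (osc k x) = 0" "otr (osc k x) = 0" "onorm x \<noteq> 0 \<or> otr x \<noteq> 0"
  shows "osc k x = 0"
  using assms by (auto simp: onorm_osc otr_osc)

lemma char2_norm_one_traceless_eq_one_O:
  fixes x :: "'a::field oct"
  assumes char2: "(2::'a) = 0" and "onorm x = 1" "otr x = 0" and sq: "x * x = osc c x"
  shows "x = one_O"
proof -
  have minus_one: "- (1::'a) = 1"
    using char2 by (metis add_eq_0_iff2 one_add_one)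
  have osc_c: "osc c x = - one_O"
    using sq oct_square[of x] assms(2,3) by simp
  then have "c * c = 1"
    using onorm_osc[of c x] assms(2) by (simp add: onorm_uminus)
  then have "(c - 1) * (c - 1) = 0"
    using char2 by (simp add: algebra_simps)
  then have "x = - one_O"
    using osc_c by simp
  then show ?thesis
    using minus_one by (simp add: one_O_eq)
qed

lemma is_G2I:
  assumes "\<And>x. h (g x) = x" "\<And>x. g (h x) = x"
    and "\<And>x y. g (x + y) = g x + g y" "\<And>c x. g (osc c x) = osc c (g x)"
    and "\<And>x y. g (x * y) = g x * g y"
  shows "is_G2 g"
  unfolding is_G2_def using assms by (metis o_bij comp_apply id_apply ext)

lemma is_G2_id: "is_G2 id"
  unfolding is_G2_def by auto

lemma is_G2_comp: "is_G2 f \<Longrightarrow> is_G2 g \<Longrightarrow> is_G2 (f \<circ> g)"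
  unfolding is_G2_def by (auto intro: bij_comp)

lemma is_G2_zero: "is_G2 g \<Longrightarrow> g 0 = 0"
  unfolding is_G2_def by (metis add.right_neutral add_left_cancel)

text \<open>Identifying \<open>\<bbbM>\<close> with \<open>2\<times>2\<close> matrices \<open>[[a, u\<^sub>1], [v\<^sub>1, b]]\<close>, these automorphisms
  restrict to conjugation by \<open>[[1, t], [0, 1]]\<close> and \<open>[[1, 0], [s, 1]]\<close>; this is where the
  formulas come from, and why they move \<open>e\<^sub>1\<close> to every idempotent of trace one in \<open>\<bbbM>\<close>.\<close>

fun unip_u :: "'a::comm_ring_1 \<Rightarrow> 'a oct \<Rightarrow> 'a oct" where
  "unip_u t (Oct a (u1,u2,u3) (v1,v2,v3) b) =
     Oct (a + t*v1) (u1 + t*(b - a) - t*t*v1, u2, u3) (v1, v2 + t*u3, v3 - t*u2) (b - t*v1)"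

fun unip_v :: "'a::comm_ring_1 \<Rightarrow> 'a oct \<Rightarrow> 'a oct" where
  "unip_v s (Oct a (u1,u2,u3) (v1,v2,v3) b) =
     Oct (a - s*u1) (u1, u2 - s*v3, u3 + s*v2) (v1 + s*(a - b) - s*s*u1, v2, v3) (b + s*u1)"

lemma is_G2_unip_u: "is_G2 (unip_u t)"
proof (rule is_G2I[where h = "unip_u (- t)"])
  fix x y :: "'a oct" and c :: 'a
  show "unip_u (- t) (unip_u t x) = x" "unip_u t (unip_u (- t) x) = x"
    by (cases x rule: oct_exhaust8; simp add: algebra_simps)+
  show "unip_u t (x + y) = unip_u t x + unip_u t y"
    by (cases x rule: oct_exhaust8; cases y rule: oct_exhaust8) (simp add: algebra_simps)
  show "unip_u t (osc c x) = osc c (unip_u t x)"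
    by (cases x rule: oct_exhaust8) (simp add: algebra_simps sc3_def)
  show "unip_u t (x * y) = unip_u t x * unip_u t y"
    by (cases x rule: oct_exhaust8; cases y rule: oct_exhaust8)
      (simp add: algebra_simps dot3_def cross3_def sc3_def add3_def)
qed

lemma is_G2_unip_v: "is_G2 (unip_v s)"
proof (rule is_G2I[where h = "unip_v (- s)"])
  fix x y :: "'a oct" and c :: 'a
  show "unip_v (- s) (unip_v s x) = x" "unip_v s (unip_v (- s) x) = x"
    by (cases x rule: oct_exhaust8; simp add: algebra_simps)+
  show "unip_v s (x + y) = unip_v s x + unip_v s y"
    by (cases x rule: oct_exhaust8; cases y rule: oct_exhaust8) (simp add: algebra_simps)
  show "unip_v s (osc c x) = osc c (unip_v s x)"
    by (cases x rule: oct_exhaust8) (simp add: algebra_simps sc3_def)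
  show "unip_v s (x * y) = unip_v s x * unip_v s y"
    by (cases x rule: oct_exhaust8; cases y rule: oct_exhaust8)
      (simp add: algebra_simps dot3_def cross3_def sc3_def add3_def)
qed

lemma G2_maps_e1_to_quatM:
  fixes x :: "'a::field oct"
  assumes "x \<in> quatM" "otr x = 1" "onorm x = 0"
  obtains g where "is_G2 g" "g e1 = x"
proof -
  obtain \<alpha> \<beta> \<gamma> \<delta> where x: "x = Oct \<alpha> (\<gamma>,0,0) (\<delta>,0,0) \<beta>"
    using assms(1) unfolding quatM_def by blast
  have tr: "\<alpha> + \<beta> = 1" and nm: "\<alpha> * \<beta> = \<gamma> * \<delta>"
    using assms(2,3) x by (simp_all add: dot3_def)
  show ?thesis
  proof (cases "\<gamma> = 0")
    case False
    have \<alpha>: "\<alpha> = 1 - \<beta>"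
      using tr by (simp add: eq_diff_eq)
    have "\<delta> * \<gamma> = \<beta> - \<beta> * \<beta>"
      using nm[unfolded \<alpha>] by (simp add: algebra_simps)
    then have "(unip_v (\<beta> / \<gamma>) \<circ> unip_u (- \<gamma>)) e1 = x"
      using x \<alpha> False by (simp add: e1_def field_simps)
    then show ?thesis
      using that is_G2_comp[OF is_G2_unip_v is_G2_unip_u] by blast
  next
    case True
    then consider "\<alpha> = 1" "\<beta> = 0" | "\<alpha> = 0" "\<beta> = 1"
      using tr nm by force
    then show ?thesis
    proof cases
      case 1
      then have "unip_v \<delta> e1 = x"
        using True x by (simp add: e1_def)
      then show ?thesis
        using that is_G2_unip_v by blast
    next
      case 2
      then have "(unip_v (1 - \<delta>) \<circ> unip_u (- 1) \<circ> unip_v 1) e1 = x"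
        using True x by (simp add: e1_def)
      then show ?thesis
        using that is_G2_comp[OF is_G2_comp[OF is_G2_unip_v is_G2_unip_u] is_G2_unip_v] by blast
    qed
  qed
qed

theorem lemma7p6:
  fixes n :: nat and a b :: "nat \<Rightarrow> 'a::field oct"
  assumes "alg_closed_field TYPE('a)"
    and "(2::'a) = 0"
    and "n \<ge> 1"
    and "a 0 \<in> {one_O, e1}"
    and "\<forall>i. 0 < i \<and> i < n \<longrightarrow> a i = 0"
    and "\<forall>i<n. b i \<in> quatM"
    and "odim (alg_gen n b) \<le> 1"
    and "S2_agree n a b"
  shows "same_G2_orbit n a b"
proof -
  have n0: "0 < n" and b0: "b 0 \<in> alg_gen n b"
    using assms(3) alg_gen.gen[of 0 n b] by auto
  have nm: "onorm (b i) = onorm (a i)" and tr: "otr (b i) = otr (a i)" if "i < n" for i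
    using assms(8) that unfolding S2_agree_def by auto
  have b0_invariants: "onorm (b 0) \<noteq> 0 \<or> otr (b 0) \<noteq> 0"
    using nm[OF n0] tr[OF n0] assms(2,4) by auto
  then have "b 0 \<noteq> 0" by auto
  then have multiple: "\<exists>c. y = osc c (b 0)" if "y \<in> alg_gen n b" for y
    using dim_le_one_imp_multiple assms(7) b0 that by (simp add: odim_def)
  have bi: "b i = 0" if "0 < i" "i < n" for i
    using multiple[OF alg_gen.gen[OF \<open>i < n\<close>]] osc_null_traceless_eq_zero[OF _ _ b0_invariants]
      nm[OF \<open>i < n\<close>] tr[OF \<open>i < n\<close>] assms(5) that by force
  obtain g where g: "is_G2 g" "g (a 0) = b 0"
  proof (cases "a 0 = one_O")
    case True
    obtain c where "b 0 * b 0 = osc c (b 0)"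
      using multiple[OF alg_gen.mult[OF b0 b0]] by blast
    then have "b 0 = a 0"
      using char2_norm_one_traceless_eq_one_O assms(2) nm[OF n0] tr[OF n0] True by simp
    then show ?thesis using that[OF is_G2_id] by simp
  next
    case False
    then show ?thesis
      using that G2_maps_e1_to_quatM[of "b 0"] assms(4,6) nm[OF n0] tr[OF n0] n0 by auto
  qed
  then show ?thesis
    unfolding same_G2_orbit_def using bi assms(5) is_G2_zero[OF g(1)] by (metis neq0_conv)
qed

end
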